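(* The model-theoretic semantics and the fixed-point semantics of $\mathcal{DL}_S$ are equivalent: for every $\mathcal{DL}_S$ program $P$, the least fixed point of the immediate consequence operator $\mathit{IC}_P$ equals the denotation $D(P)=\bigcap_{I\in\mathbf{M}(P)} I$, where $\mathbf{M}(P)$ is the set of all Herbrand models of $P$.
   Context: Fix a set $\mathit{Lit}$ of literals, a set of variables, and relation symbols, each with a fixed arity. Values: $\mathit{Val} ::= R(v_1,\ldots,v_n) \mid \ell$ with $R$ of arity $n$, $v_i\in\mathit{Val}$, $\ell\in\mathit{Lit}$. Facts are values of the form $R(v_1,\ldots,v_n)$ (possibly nested). Terms: $t ::= R(t_1,\ldots,t_n)\mid x \mid \ell$, $x$ a variable. A $\mathcal{DL}_S$ rule $R$ has a head clause $\mathit{Head}(R)=Q(t_1,\ldots,t_n)$ and a finite set $\mathit{Body}(R)$ of body clauses of the form $\mathit{id}=Q(t_1,\ldots,t_n)$ ($\mathit{id}$ a variable naming the matched fact); every head variable occurs in the body. A program $P$ is a finite set of rules. A substitution $\sigma$ maps variables to values; for a set of facts $I$, $\mathit{Body}(R)\sigma\subseteq I$ means that for each body clause $\mathit{id}=Q(\vec t)$, $Q(\vec t)\sigma\in I$ and $\sigma(\mathit{id})=Q(\vec t)\sigma$. $\mathit{subfact}(R(v_1,\ldots,v_n))=\{R(v_1,\ldots,v_n)\}\cup\bigcup_i\mathit{subfact}(v_i)$, $\mathit{subfact}(\ell)=\emptyset$ for literals; a set of facts $I$ is subfact-closed if $I=\bigcup\{\mathit{subfact}(f)\mid f\in I\}$.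 A database is a set of facts, ordered by inclusion. $\mathit{IC}_R(\mathit{db})=\mathit{db}\cup\bigcup\{\mathit{subfact}(\mathit{Head}(R)\sigma)\mid \mathit{Body}(R)\sigma\subseteq\mathit{db}\}$ and $\mathit{IC}_P(\mathit{db})=\mathit{db}\cup\bigcup_{R\in P}\mathit{IC}_R(\mathit{db})$; $\mathit{IC}_P$ is monotone, so it has a least fixed point. The Herbrand universe of $P$ is the set of all facts constructible from the relation symbols appearing in $P$ (and literals). A Herbrand interpretation is a subfact-closed subset $I$ of the Herbrand universe. $I\models R$ iff for every substitution $\sigma$, $\mathit{Body}(R)\sigma\subseteq I$ implies $\mathit{Head}(R)\sigma\in I$. A Herbrand model of $P$ is a Herbrand interpretation in which every rule of $P$ is true. *)

theory Defs
  imports Main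
begin

datatype ('r, 'l) val = Fact 'r "('r, 'l) val list" | Lit 'l

datatype ('r, 'l, 'v) trm = TFact 'r "('r, 'l, 'v) trm list" | Var 'v | TLit 'l

text \<open>A rule: head clause Q(t1..tn) and a set of body clauses id = Q(t1..tn).\<close>
datatype ('r, 'l, 'v) rule =
  Rule (head: "'r \<times> ('r, 'l, 'v) trm list")
       (body: "('v \<times> 'r \<times> ('r, 'l, 'v) trm list) set")

fun wf_val :: "('r \<Rightarrow> nat) \<Rightarrow> ('r, 'l) val \<Rightarrow> bool" where
  "wf_val ar (Fact R vs) = (length vs = ar R \<and> (\<forall>v\<in>set vs. wf_val ar v))"
| "wf_val ar (Lit l) = True"

fun wf_trm :: "('r \<Rightarrow> nat) \<Rightarrow> ('r, 'l, 'v) trm \<Rightarrow> bool" where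
  "wf_trm ar (TFact R ts) = (length ts = ar R \<and> (\<forall>t\<in>set ts. wf_trm ar t))"
| "wf_trm ar (Var x) = True"
| "wf_trm ar (TLit l) = True"

fun tvars :: "('r, 'l, 'v) trm \<Rightarrow> 'v set" where
  "tvars (TFact R ts) = (\<Union>t\<in>set ts. tvars t)"
| "tvars (Var x) = {x}"
| "tvars (TLit l) = {}"

fun trels :: "('r, 'l, 'v) trm \<Rightarrow> 'r set" where
  "trels (TFact R ts) = insert R (\<Union>t\<in>set ts. trels t)"
| "trels (Var x) = {}"
| "trels (TLit l) = {}"

fun tsubst :: "('v \<Rightarrow> ('r, 'l) val) \<Rightarrow> ('r, 'l, 'v) trm \<Rightarrow> ('r, 'l) val" where
  "tsubst \<sigma> (TFact R ts) = Fact R (map (tsubst \<sigma>) ts)"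
| "tsubst \<sigma> (Var x) = \<sigma> x"
| "tsubst \<sigma> (TLit l) = Lit l"

fun subfact :: "('r, 'l) val \<Rightarrow> ('r, 'l) val set" where
  "subfact (Fact R vs) = insert (Fact R vs) (\<Union>v\<in>set vs. subfact v)"
| "subfact (Lit l) = {}"

definition subfact_closed :: "('r, 'l) val set \<Rightarrow> bool" where
  "subfact_closed I \<longleftrightarrow> I = \<Union> (subfact ` I)"

definition clause_inst :: "('v \<Rightarrow> ('r, 'l) val) \<Rightarrow> 'r \<times> ('r, 'l, 'v) trm list \<Rightarrow> ('r, 'l) val" where
  "clause_inst \<sigma> c = Fact (fst c) (map (tsubst \<sigma>) (snd c))"

definition wf_subst :: "('r \<Rightarrow> nat) \<Rightarrow> ('v \<Rightarrow> ('r, 'l) val) \<Rightarrow> bool" where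
  "wf_subst ar \<sigma> \<longleftrightarrow> (\<forall>x. wf_val ar (\<sigma> x))"

definition body_sat :: "('v \<Rightarrow> ('r, 'l) val) \<Rightarrow> ('v \<times> 'r \<times> ('r, 'l, 'v) trm list) set
    \<Rightarrow> ('r, 'l) val set \<Rightarrow> bool" where
  "body_sat \<sigma> B I \<longleftrightarrow>
     (\<forall>(i, Q, ts) \<in> B. clause_inst \<sigma> (Q, ts) \<in> I \<and> \<sigma> i = clause_inst \<sigma> (Q, ts))"

definition IC_R :: "('r \<Rightarrow> nat) \<Rightarrow> ('r, 'l, 'v) rule \<Rightarrow> ('r, 'l) val set \<Rightarrow> ('r, 'l) val set" where
  "IC_R ar R db = db \<union>
     \<Union> {subfact (clause_inst \<sigma> (head R)) | \<sigma>. wf_subst ar \<sigma> \<and> body_sat \<sigma> (body R) db}"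

definition IC_P :: "('r \<Rightarrow> nat) \<Rightarrow> ('r, 'l, 'v) rule set \<Rightarrow> ('r, 'l) val set \<Rightarrow> ('r, 'l) val set" where
  "IC_P ar P db = db \<union> (\<Union>R\<in>P. IC_R ar R db)"

definition body_vars :: "('v \<times> 'r \<times> ('r, 'l, 'v) trm list) set \<Rightarrow> 'v set" where
  "body_vars B = (\<Union>(i, Q, ts) \<in> B. insert i (\<Union>t\<in>set ts. tvars t))"

definition rule_rels :: "('r, 'l, 'v) rule \<Rightarrow> 'r set" where
  "rule_rels R = insert (fst (head R)) (\<Union>t\<in>set (snd (head R)). trels t)
      \<union> (\<Union>(i, Q, ts) \<in> body R. insert Q (\<Union>t\<in>set ts. trels t))"

definition prog_rels :: "('r, 'l, 'v) rule set \<Rightarrow> 'r set" where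
  "prog_rels P = (\<Union>R\<in>P. rule_rels R)"

definition clause_wf :: "('r \<Rightarrow> nat) \<Rightarrow> 'r \<times> ('r, 'l, 'v) trm list \<Rightarrow> bool" where
  "clause_wf ar c \<longleftrightarrow> length (snd c) = ar (fst c) \<and> (\<forall>t\<in>set (snd c). wf_trm ar t)"

definition wf_rule :: "('r \<Rightarrow> nat) \<Rightarrow> ('r, 'l, 'v) rule \<Rightarrow> bool" where
  "wf_rule ar R \<longleftrightarrow> clause_wf ar (head R) \<and> finite (body R)
     \<and> (\<forall>(i, Q, ts) \<in> body R. clause_wf ar (Q, ts))
     \<and> (\<Union>t\<in>set (snd (head R)). tvars t) \<subseteq> body_vars (body R)"

definition wf_program :: "('r \<Rightarrow> nat) \<Rightarrow> ('r, 'l, 'v) rule set \<Rightarrow> bool" where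
  "wf_program ar P \<longleftrightarrow> finite P \<and> (\<forall>R\<in>P. wf_rule ar R)"

inductive_set herbrand_universe :: "('r \<Rightarrow> nat) \<Rightarrow> ('r, 'l, 'v) rule set \<Rightarrow> ('r, 'l) val set"
  for ar P where
  "\<lbrakk> R \<in> prog_rels P; length vs = ar R;
     \<forall>v\<in>set vs. (\<exists>l. v = Lit l) \<or> v \<in> herbrand_universe ar P \<rbrakk>
   \<Longrightarrow> Fact R vs \<in> herbrand_universe ar P"

definition herbrand_interp :: "('r \<Rightarrow> nat) \<Rightarrow> ('r, 'l, 'v) rule set \<Rightarrow> ('r, 'l) val set \<Rightarrow> bool" where
  "herbrand_interp ar P I \<longleftrightarrow> I \<subseteq> herbrand_universe ar P \<and> subfact_closed I"

definition rule_true :: "('r \<Rightarrow> nat) \<Rightarrow> ('r, 'l) val set \<Rightarrow> ('r, 'l, 'v) rule \<Rightarrow> bool" where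
  "rule_true ar I R \<longleftrightarrow>
     (\<forall>\<sigma>. wf_subst ar \<sigma> \<longrightarrow> body_sat \<sigma> (body R) I \<longrightarrow> clause_inst \<sigma> (head R) \<in> I)"

definition herbrand_model :: "('r \<Rightarrow> nat) \<Rightarrow> ('r, 'l, 'v) rule set \<Rightarrow> ('r, 'l) val set \<Rightarrow> bool" where
  "herbrand_model ar P I \<longleftrightarrow> herbrand_interp ar P I \<and> (\<forall>R\<in>P. rule_true ar I R)"

definition models :: "('r \<Rightarrow> nat) \<Rightarrow> ('r, 'l, 'v) rule set \<Rightarrow> ('r, 'l) val set set" where
  "models ar P = {I. herbrand_model ar P I}"

definition denotation :: "('r \<Rightarrow> nat) \<Rightarrow> ('r, 'l, 'v) rule set \<Rightarrow> ('r, 'l) val set" where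
  "denotation ar P = \<Inter> (models ar P)"

end

theory Submission
  imports Defs
begin

text \<open>A Herbrand interpretation is a model of P exactly when it is closed under the
  immediate consequence operator, because subfact closure absorbs the subfacts that
  IC_P adds. The least fixed point of IC_P is contained in every closed set, hence in
  every model. Conversely it is itself a model: it is a fixed point; subfact closedness
  survives each application of IC_P and arbitrary unions, so transfinite induction
  carries it up to the least fixed point; and it lies in the Herbrand universe, which
  is a model because rules respect the arities and their head variables occur in the
  body. Without these well-formedness conditions there may be no model at all, and the
  denotation degenerates to the set of all values.\<close>

lemma subfact_Fact: "y \<in> subfact x \<Longrightarrow> \<exists>R vs. y = Fact R vs"
  by (induction x rule: subfact.induct) auto

lemma subfact_trans: "y \<in> subfact x \<Longrightarrow> subfact y \<subseteq> subfact x"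
  by (induction x rule: subfact.induct) auto

lemma subfact_closed_iff: "subfact_closed I \<longleftrightarrow> (\<forall>x\<in>I. x \<in> subfact x \<and> subfact x \<subseteq> I)"
proof
  assume "subfact_closed I"
  then show "\<forall>x\<in>I. x \<in> subfact x \<and> subfact x \<subseteq> I"
    unfolding subfact_closed_def by (metis UN_E UN_upper subfact_trans subfact_Fact subfact.simps(1) insertI1)
qed (auto simp: subfact_closed_def)

lemma subfact_closed_subfact: "subfact_closed (subfact x)"
  unfolding subfact_closed_iff by (metis subfact.simps(1) insertI1 subfact_Fact subfact_trans)

lemma subfact_closed_Union: "\<forall>I\<in>M. subfact_closed I \<Longrightarrow> subfact_closed (\<Union>M)"
  unfolding subfact_closed_iff by blast

lemma subfact_closed_Un: "subfact_closed I \<Longrightarrow> subfact_closed J \<Longrightarrow> subfact_closed (I \<union> J)"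
  unfolding subfact_closed_iff by blast

definition herbrand_val :: "('r \<Rightarrow> nat) \<Rightarrow> ('r, 'l, 'v) rule set \<Rightarrow> ('r, 'l) val \<Rightarrow> bool" where
  "herbrand_val ar P v \<longleftrightarrow> (\<exists>l. v = Lit l) \<or> v \<in> herbrand_universe ar P"

lemma Fact_in_herbrand_universe_iff:
  "Fact R vs \<in> herbrand_universe ar P \<longleftrightarrow>
     R \<in> prog_rels P \<and> length vs = ar R \<and> (\<forall>v\<in>set vs. herbrand_val ar P v)"
  by (auto simp: herbrand_val_def elim: herbrand_universe.cases intro: herbrand_universe.intros)

lemma subfact_subset_herbrand_universe:
  "herbrand_val ar P v \<Longrightarrow> subfact v \<subseteq> herbrand_universe ar P"
proof (induction v rule: subfact.induct)
  case (1 R vs)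
  then show ?case by (auto simp: herbrand_val_def Fact_in_herbrand_universe_iff)
qed simp

lemma subfact_closed_herbrand_universe: "subfact_closed (herbrand_universe ar P)"
  unfolding subfact_closed_iff
  by (metis herbrand_universe.cases herbrand_val_def subfact.simps(1) insertI1
      subfact_subset_herbrand_universe)

lemma herbrand_val_tsubst_var:
  "herbrand_val ar P (tsubst \<sigma> t) \<Longrightarrow> x \<in> tvars t \<Longrightarrow> herbrand_val ar P (\<sigma> x)"
proof (induction t)
  case (TFact R ts)
  then show ?case by (auto simp: herbrand_val_def Fact_in_herbrand_universe_iff)
qed auto

lemma herbrand_val_tsubst:
  "wf_trm ar t \<Longrightarrow> trels t \<subseteq> prog_rels P \<Longrightarrow> \<forall>x\<in>tvars t. herbrand_val ar P (\<sigma> x) \<Longrightarrow>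
     herbrand_val ar P (tsubst \<sigma> t)"
proof (induction t)
  case (TFact R ts)
  have "herbrand_val ar P (tsubst \<sigma> t)" if "t \<in> set ts" for t
    using TFact.prems that by (intro TFact.IH[OF that]) auto
  then have "Fact R (map (tsubst \<sigma>) ts) \<in> herbrand_universe ar P"
    using TFact.prems by (auto simp: Fact_in_herbrand_universe_iff)
  then show ?case by (simp add: herbrand_val_def)
qed (auto simp: herbrand_val_def)

lemma herbrand_val_body_var:
  assumes body: "body_sat \<sigma> B I" and I: "I \<subseteq> herbrand_universe ar P"
    and x: "x \<in> body_vars B"
  shows "herbrand_val ar P (\<sigma> x)"
proof -
  obtain i Q ts where c: "(i, Q, ts) \<in> B" and x_cases: "x = i \<or> (\<exists>t\<in>set ts. x \<in> tvars t)"
    using x unfolding body_vars_def by blast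
  from body c have inst: "Fact Q (map (tsubst \<sigma>) ts) \<in> herbrand_universe ar P"
    and i: "\<sigma> i = Fact Q (map (tsubst \<sigma>) ts)"
    using I unfolding body_sat_def clause_inst_def by auto
  from x_cases show ?thesis
  proof
    assume "x = i"
    then show ?thesis using inst i by (simp add: herbrand_val_def)
  next
    assume "\<exists>t\<in>set ts. x \<in> tvars t"
    then obtain t where "t \<in> set ts" "x \<in> tvars t" by blast
    with inst show ?thesis
      by (auto simp: Fact_in_herbrand_universe_iff intro: herbrand_val_tsubst_var)
  qed
qed

lemma head_inst_in_herbrand_universe:
  assumes wf: "wf_rule ar R" and rels: "rule_rels R \<subseteq> prog_rels P"
    and body: "body_sat \<sigma> (body R) I" and I: "I \<subseteq> herbrand_universe ar P"
  shows "clause_inst \<sigma> (head R) \<in> herbrand_universe ar P"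
proof -
  obtain Q ts where head: "head R = (Q, ts)" by fastforce
  have "herbrand_val ar P (tsubst \<sigma> t)" if t: "t \<in> set ts" for t
  proof (rule herbrand_val_tsubst)
    show "wf_trm ar t" "trels t \<subseteq> prog_rels P"
      using wf rels head t by (auto simp: wf_rule_def clause_wf_def rule_rels_def)
    show "\<forall>x\<in>tvars t. herbrand_val ar P (\<sigma> x)"
      using wf head t by (auto simp: wf_rule_def intro: herbrand_val_body_var[OF body I])
  qed
  then show ?thesis
    using wf rels head by (auto simp: clause_inst_def Fact_in_herbrand_universe_iff
        wf_rule_def clause_wf_def rule_rels_def)
qed

lemma herbrand_model_herbrand_universe:
  assumes "wf_program ar P"
  shows "herbrand_model ar P (herbrand_universe ar P)"
proof -
  have "clause_inst \<sigma> (head R) \<in> herbrand_universe ar P"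
    if "R \<in> P" "body_sat \<sigma> (body R) (herbrand_universe ar P)" for R \<sigma>
    using that assms
    by (intro head_inst_in_herbrand_universe[of ar R P \<sigma> "herbrand_universe ar P"])
      (auto simp: prog_rels_def wf_program_def)
  then show ?thesis
    using subfact_closed_herbrand_universe
    by (auto simp: herbrand_model_def herbrand_interp_def rule_true_def)
qed

lemma body_sat_mono: "body_sat \<sigma> B I \<Longrightarrow> I \<subseteq> J \<Longrightarrow> body_sat \<sigma> B J"
  unfolding body_sat_def by blast

lemma mono_IC_R:
  fixes R :: "('r, 'l, 'v) rule"
  shows "mono (IC_R ar R)"
proof (rule monoI)
  fix I J :: "('r, 'l) val set"
  assume "I \<subseteq> J"
  then show "IC_R ar R I \<subseteq> IC_R ar R J"
    unfolding IC_R_def using body_sat_mono[of _ "body R" I J] by blast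
qed

lemma mono_IC_P:
  fixes P :: "('r, 'l, 'v) rule set"
  shows "mono (IC_P ar P)"
proof (rule monoI)
  fix I J :: "('r, 'l) val set"
  assume "I \<subseteq> J"
  then have "IC_R ar R I \<subseteq> IC_R ar R J" for R :: "('r, 'l, 'v) rule"
    by (rule monoD[OF mono_IC_R])
  then show "IC_P ar P I \<subseteq> IC_P ar P J"
    unfolding IC_P_def using \<open>I \<subseteq> J\<close> by blast
qed

lemma subfact_closed_IC_R:
  assumes "subfact_closed I"
  shows "subfact_closed (IC_R ar R I)"
  unfolding IC_R_def
proof (intro subfact_closed_Un subfact_closed_Union ballI)
  fix J
  assume "J \<in> {subfact (clause_inst \<sigma> (head R)) | \<sigma>. wf_subst ar \<sigma> \<and> body_sat \<sigma> (body R) I}"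
  then show "subfact_closed J" using subfact_closed_subfact by blast
qed (rule assms)

lemma subfact_closed_IC_P:
  assumes "subfact_closed I"
  shows "subfact_closed (IC_P ar P I)"
  unfolding IC_P_def
  using assms subfact_closed_IC_R by (intro subfact_closed_Un subfact_closed_Union ballI) auto

lemma subfact_closed_lfp_IC_P: "subfact_closed (lfp (IC_P ar P))"
  using mono_IC_P subfact_closed_IC_P subfact_closed_Union by (rule lfp_ordinal_induct_set)

lemma IC_R_subset_iff:
  "IC_R ar R I \<subseteq> I \<longleftrightarrow>
     (\<forall>\<sigma>. wf_subst ar \<sigma> \<longrightarrow> body_sat \<sigma> (body R) I \<longrightarrow> subfact (clause_inst \<sigma> (head R)) \<subseteq> I)"
  unfolding IC_R_def by blast

lemma IC_P_subset_iff: "IC_P ar P I \<subseteq> I \<longleftrightarrow> (\<forall>R\<in>P. IC_R ar R I \<subseteq> I)"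
  unfolding IC_P_def by blast

lemma herbrand_model_iff_IC_P_closed:
  fixes P :: "('r, 'l, 'v) rule set"
  shows "herbrand_model ar P I \<longleftrightarrow> herbrand_interp ar P I \<and> IC_P ar P I \<subseteq> I"
proof (cases "herbrand_interp ar P I")
  case True
  have "subfact (clause_inst \<sigma> c) \<subseteq> I \<longleftrightarrow> clause_inst \<sigma> c \<in> I"
    for \<sigma> and c :: "'r \<times> ('r, 'l, 'v) trm list"
  proof
    show "subfact (clause_inst \<sigma> c) \<subseteq> I \<Longrightarrow> clause_inst \<sigma> c \<in> I"
      by (auto simp: clause_inst_def)
    show "clause_inst \<sigma> c \<in> I \<Longrightarrow> subfact (clause_inst \<sigma> c) \<subseteq> I"
      using True by (simp add: herbrand_interp_def subfact_closed_iff)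
  qed
  then show ?thesis
    by (simp add: True herbrand_model_def rule_true_def IC_P_subset_iff IC_R_subset_iff)
qed (simp add: herbrand_model_def)

theorem mainTheorem5:
  fixes ar :: "'r \<Rightarrow> nat" and P :: "('r, 'l, 'v) rule set"
  assumes "wf_program ar P"
  shows "lfp (IC_P ar P) = denotation ar P"
proof (rule antisym)
  have lfp_below_model: "lfp (IC_P ar P) \<subseteq> M" if "herbrand_model ar P M" for M
    using that by (simp add: herbrand_model_iff_IC_P_closed lfp_lowerbound)
  then show "lfp (IC_P ar P) \<subseteq> denotation ar P"
    by (auto simp: denotation_def models_def)
  have "lfp (IC_P ar P) \<subseteq> herbrand_universe ar P"
    using lfp_below_model herbrand_model_herbrand_universe[OF assms] .
  then have "herbrand_model ar P (lfp (IC_P ar P))"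
    by (simp add: herbrand_model_iff_IC_P_closed herbrand_interp_def subfact_closed_lfp_IC_P
        lfp_fixpoint[OF mono_IC_P])
  then show "denotation ar P \<subseteq> lfp (IC_P ar P)"
    by (auto simp: denotation_def models_def)
qed

end
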